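(* Let $(C_n)_{n\ge1}$ be a family of reversible circuits, where $C_n$ acts on $n$ bits and consists only of Toffoli gates arranged in $\mathcal{D}(n)\ge 1$ layers, layer $\ell$ containing $m_\ell\ge 1$ Toffoli gates acting on pairwise disjoint triples of bits; let $\mathcal{S}(n)=\sum_{\ell}m_\ell$ be the total number of gates and $\Delta(n)=\mathcal{S}(n)/\mathcal{D}(n)$. Let $\tau(n)>0$ be the energy bound. Let $T(n)$ be the total running time of the standard parallel implementation of $C_n$ on $n$ qubits, in which layer $\ell$ is implemented by the constant Hamiltonian $\lambda_\ell\sum_{j=1}^{m_\ell}G_{\ell,j}$ (with $G_{\ell,j}$ the Toffoli gate of that layer acting on its triple of qubits, tensored with the identity elsewhere) with $\lambda_\ell>0$ chosen so that $p\big(\lambda_\ell\sum_j G_{\ell,j}\big)=\tau(n)$, applied for the least time $t_\ell>0$ for which it realises $\prod_j G_{\ell,j}$ up to a global phase, so that $T(n)=\sum_\ell t_\ell$. Then the same computation can be performed using coherent parallelisation in time $O\big(T(n)/\Delta(n)\big)$: there exist a piecewise-constant Hamiltonian $H_n(t)$ on $n$ qubits with $p(H_n(t))\le\tau(n)$ for all $t$ and a time $T_{\#}(n)=O\big(T(n)/\Delta(n)\big)$ such that $\mathcal{T}\exp\big(-i\int_0^{T_{\#}(n)}H_n(t')\,dt'\big)$ equals, up to a global phase, the unitary $U_{C_n}$ that maps each computational basis state $|x\rangle$ to $|C_n(x)\rangle$.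
   Context: For a Hermitian operator $A$ on a finite-dimensional Hilbert space, $p(A)=h_{\max}-h_{\min}$, the difference between its largest and smallest eigenvalues. The Toffoli gate is the 3-qubit unitary (Hermitian) permutation matrix $|a,b,c\rangle\mapsto|a,b,c\oplus ab\rangle$. $\mathcal{T}$ denotes the time-ordering operator. "Coherent parallelisation" of a layer of gates $G_1,\dots,G_m$ acting on disjoint subsystems means implementing it with a Hamiltonian proportional to the product/tensor product $\prod_j G_j$ rather than to the sum $\sum_j G_j$. *)

theory Defs
  imports "Jordan_Normal_Form.Char_Poly" "HOL-Library.Landau_Symbols"
begin

definition hermitian_mat :: "complex mat \<Rightarrow> bool" where
  "hermitian_mat A \<longleftrightarrow> dim_row A = dim_col A \<and>
     (\<forall>i<dim_row A. \<forall>j<dim_row A. A $$ (i,j) = cnj (A $$ (j,i)))"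

text \<open>p(A) = largest eigenvalue minus smallest eigenvalue (eigenvalues of a
  Hermitian matrix are real; we take real parts).\<close>
definition spread :: "complex mat \<Rightarrow> real" where
  "spread A = Max (Re ` {k. eigenvalue A k}) - Min (Re ` {k. eigenvalue A k})"

definition mexp :: "complex mat \<Rightarrow> complex mat" where
  "mexp A = mat (dim_row A) (dim_col A)
     (\<lambda>(i,j). \<Sum>k. (A ^\<^sub>m k) $$ (i,j) / of_nat (fact k))"

definition perm_mat :: "nat \<Rightarrow> (nat \<Rightarrow> nat) \<Rightarrow> complex mat" where
  "perm_mat n f = mat (2^n) (2^n) (\<lambda>(i,j). if i = f j then 1 else 0)"

text \<open>A gate is a triple (a,b,c): control bits a,b, target bit c.
  Basis states of n bits are encoded as naturals x < 2^n, bit i being \<open>bit x i\<close>.\<close>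
type_synonym gate = "nat \<times> nat \<times> nat"
type_synonym layer = "gate list"
type_synonym circuit = "layer list"

definition gate_bits :: "gate \<Rightarrow> nat set" where
  "gate_bits g = (case g of (a,b,c) \<Rightarrow> {a,b,c})"

definition valid_gate :: "nat \<Rightarrow> gate \<Rightarrow> bool" where
  "valid_gate n g = (case g of (a,b,c) \<Rightarrow>
      a < n \<and> b < n \<and> c < n \<and> a \<noteq> b \<and> a \<noteq> c \<and> b \<noteq> c)"

definition valid_layer :: "nat \<Rightarrow> layer \<Rightarrow> bool" where
  "valid_layer n L \<longleftrightarrow> L \<noteq> [] \<and> (\<forall>g\<in>set L. valid_gate n g) \<and>
     (\<forall>i<length L. \<forall>j<length L. i \<noteq> j \<longrightarrow> gate_bits (L!i) \<inter> gate_bits (L!j) = {})"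

definition valid_circuit :: "nat \<Rightarrow> circuit \<Rightarrow> bool" where
  "valid_circuit n C \<longleftrightarrow> C \<noteq> [] \<and> (\<forall>L\<in>set C. valid_layer n L)"

definition toffoli_fun :: "gate \<Rightarrow> nat \<Rightarrow> nat" where
  "toffoli_fun g x = (case g of (a,b,c) \<Rightarrow>
      if bit x a \<and> bit x b then flip_bit c x else x)"

definition layer_fun :: "layer \<Rightarrow> nat \<Rightarrow> nat" where
  "layer_fun L x = fold toffoli_fun L x"

definition circuit_fun :: "circuit \<Rightarrow> nat \<Rightarrow> nat" where
  "circuit_fun C x = fold layer_fun C x"

text \<open>Toffoli gate on its triple of qubits tensored with identity elsewhere.\<close>
definition toffoli_mat :: "nat \<Rightarrow> gate \<Rightarrow> complex mat" where
  "toffoli_mat n g = perm_mat n (toffoli_fun g)"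

definition circuit_unitary :: "nat \<Rightarrow> circuit \<Rightarrow> complex mat" where
  "circuit_unitary n C = perm_mat n (circuit_fun C)"

definition gates_sum :: "nat \<Rightarrow> layer \<Rightarrow> complex mat" where
  "gates_sum n L = foldr (\<lambda>g M. toffoli_mat n g + M) L (0\<^sub>m (2^n) (2^n))"

definition gates_prod :: "nat \<Rightarrow> layer \<Rightarrow> complex mat" where
  "gates_prod n L = foldr (\<lambda>g M. toffoli_mat n g * M) L (1\<^sub>m (2^n))"

definition std_lambda :: "nat \<Rightarrow> real \<Rightarrow> layer \<Rightarrow> real" where
  "std_lambda n tau L = (THE lam. lam > 0 \<and>
      spread (complex_of_real lam \<cdot>\<^sub>m gates_sum n L) = tau)"

definition std_time :: "nat \<Rightarrow> real \<Rightarrow> layer \<Rightarrow> real" where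
  "std_time n tau L = Inf {t. t > 0 \<and> (\<exists>\<phi>::real.
      mexp ((- \<i> * complex_of_real (t * std_lambda n tau L)) \<cdot>\<^sub>m gates_sum n L)
        = exp (\<i> * complex_of_real \<phi>) \<cdot>\<^sub>m gates_prod n L)}"

definition std_total_time :: "nat \<Rightarrow> real \<Rightarrow> circuit \<Rightarrow> real" where
  "std_total_time n tau C = (\<Sum>L\<leftarrow>C. std_time n tau L)"

definition circuit_size :: "circuit \<Rightarrow> nat" where
  "circuit_size C = (\<Sum>L\<leftarrow>C. length L)"

definition circuit_depth :: "circuit \<Rightarrow> nat" where
  "circuit_depth C = length C"

text \<open>A piecewise-constant Hamiltonian is a list of segments (duration, H),
  applied in order starting at time 0.  Its time-ordered exponential
  T exp(-i int_0^T H) is the product of the segment propagators, later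
  segments to the left.\<close>
definition pc_duration :: "(real \<times> complex mat) list \<Rightarrow> real" where
  "pc_duration Hs = (\<Sum>(d,H)\<leftarrow>Hs. d)"

definition time_ordered_exp :: "nat \<Rightarrow> (real \<times> complex mat) list \<Rightarrow> complex mat" where
  "time_ordered_exp n Hs =
     fold (\<lambda>(d,H) U. mexp ((- \<i> * complex_of_real d) \<cdot>\<^sub>m H) * U) Hs (1\<^sub>m (2^n))"

definition valid_pc_hamiltonian :: "nat \<Rightarrow> real \<Rightarrow> (real \<times> complex mat) list \<Rightarrow> bool" where
  "valid_pc_hamiltonian n tau Hs \<longleftrightarrow> (\<forall>(d,H)\<in>set Hs.
      d > 0 \<and> H \<in> carrier_mat (2^n) (2^n) \<and> hermitian_mat H \<and> spread H \<le> tau)"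

end

theory Submission
  imports Defs "Jordan_Normal_Form.Spectral_Radius"
begin

(* A layer of m Toffoli gates G_j on disjoint triples has gate sum H = \<Sum> G_j with eigenvalue m on
   |0...0> and eigenvalue -m on the product of the (-1)-eigenvectors |110> - |111> of the gates, so
   p(H) \<ge> 2m and the standard implementation uses \<lambda> \<le> \<tau>/(2m). The gates commute, so exp(-i s H)
   factorises over them; comparing diagonal entries at a state moved by exactly one gate shows that
   exp(-i s H) is a multiple of \<Prod> G_j only if cos s = 0. Each layer therefore needs time at least
   \<pi>/(2\<lambda>) \<ge> \<pi>m/\<tau>, and T \<ge> \<pi> S/\<tau>. Coherently, P = \<Prod> G_j is a permutation involution, so (\<tau>/2) P
   has spread at most \<tau> and evolves in time \<pi>/\<tau> into exp(-i \<pi>/2 P) = -i P. The whole circuit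
   then takes time D \<pi>/\<tau> \<le> T D/S. *)

section \<open>The matrix exponential\<close>

lemma index_mult_mat_sum:
  assumes "A \<in> carrier_mat N N" "B \<in> carrier_mat N N" "i < N" "j < N"
  shows "(A * B) $$ (i,j) = (\<Sum>r<N. A $$ (i,r) * B $$ (r,j))"
  using assms by (auto simp: scalar_prod_def lessThan_atLeast0 intro!: sum.cong)

lemma smult_smult_mat: "a \<cdot>\<^sub>m (b \<cdot>\<^sub>m A) = (a * b) \<cdot>\<^sub>m (A :: 'a :: semigroup_mult mat)"
  by (rule eq_matI) (auto simp: mult.assoc)

lemma smult_mult_smult_mat:
  fixes A B :: "'a :: comm_ring_1 mat"
  assumes "A \<in> carrier_mat nr n" "B \<in> carrier_mat n nc"
  shows "(a \<cdot>\<^sub>m A) * (b \<cdot>\<^sub>m B) = (a * b) \<cdot>\<^sub>m (A * B)"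
  using assms by (simp add: mult_smult_assoc_mat[of _ nr n] mult_smult_distrib[of _ nr n] smult_smult_mat
      mult.commute)

lemma smult_mat_commute:
  fixes X Y :: "'a :: comm_ring_1 mat"
  assumes X: "X \<in> carrier_mat N N" and Y: "Y \<in> carrier_mat N N" and XY: "X * Y = Y * X"
  shows "(c \<cdot>\<^sub>m X) * (d \<cdot>\<^sub>m Y) = (d \<cdot>\<^sub>m Y) * (c \<cdot>\<^sub>m X)"
  using X Y XY by (simp add: smult_mult_smult_mat[of _ N N] mult.commute)

lemma pow_mat_smult:
  fixes X :: "'a :: comm_ring_1 mat"
  assumes X: "X \<in> carrier_mat N N"
  shows "(c \<cdot>\<^sub>m X) ^\<^sub>m k = c ^ k \<cdot>\<^sub>m X ^\<^sub>m k"
proof (induction k)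
  case 0
  show ?case using X by (auto intro!: eq_matI)
next
  case (Suc k)
  have "(c ^ k \<cdot>\<^sub>m X ^\<^sub>m k) * (c \<cdot>\<^sub>m X) = c ^ Suc k \<cdot>\<^sub>m X ^\<^sub>m Suc k"
    using X by (simp add: smult_mult_smult_mat[of _ N N] mult.commute)
  then show ?case using Suc by simp
qed

lemma dim_mexp [simp]: "dim_row (mexp A) = dim_row A" "dim_col (mexp A) = dim_col A"
  by (simp_all add: mexp_def)

lemma mexp_carrier [simp]: "A \<in> carrier_mat N N \<Longrightarrow> mexp A \<in> carrier_mat N N"
  by (intro carrier_matI) simp_all

lemma index_mexp:
  "A \<in> carrier_mat N N \<Longrightarrow> i < N \<Longrightarrow> j < N \<Longrightarrow>
   mexp A $$ (i,j) = (\<Sum>k. (A ^\<^sub>m k) $$ (i,j) / fact k)"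
  by (simp add: mexp_def)

lemma index_pow_mat_bound:
  fixes A :: "complex mat"
  assumes A: "A \<in> carrier_mat N N" and M: "\<And>i j. i < N \<Longrightarrow> j < N \<Longrightarrow> norm (A $$ (i,j)) \<le> M"
    and ij: "i < N" "j < N"
  shows "norm ((A ^\<^sub>m k) $$ (i,j)) \<le> (N * M) ^ k"
  using ij
proof (induction k arbitrary: j)
  case 0
  then show ?case using A by simp
next
  case (Suc k)
  have "0 \<le> M" using M[OF ij] norm_ge_zero order_trans by blast
  have "norm ((A ^\<^sub>m Suc k) $$ (i,j)) = norm (\<Sum>r<N. (A ^\<^sub>m k) $$ (i,r) * A $$ (r,j))"
    unfolding pow_mat.simps(2) using A ij Suc.prems by (subst index_mult_mat_sum) auto
  also have "\<dots> \<le> (\<Sum>r<N. norm ((A ^\<^sub>m k) $$ (i,r)) * norm (A $$ (r,j)))"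
    by (rule order_trans[OF norm_sum]) (simp add: norm_mult)
  also have "\<dots> \<le> (\<Sum>r<N. (N * M) ^ k * M)"
    using Suc \<open>0 \<le> M\<close> M by (intro sum_mono mult_mono) auto
  also have "\<dots> = (N * M) ^ Suc k" by simp
  finally show ?case .
qed

lemma summable_index_mexp_series:
  fixes A :: "complex mat"
  assumes A: "A \<in> carrier_mat N N" and ij: "i < N" "j < N"
  shows "summable (\<lambda>k. norm ((A ^\<^sub>m k) $$ (i,j) / fact k))"
proof (rule summable_comparison_test)
  define M where "M = (\<Sum>i<N. \<Sum>j<N. norm (A $$ (i,j)))"
  have "norm (A $$ (i,j)) \<le> M" if "i < N" "j < N" for i j
    unfolding M_def using that
    by (intro order_trans[OF member_le_sum[of j] member_le_sum[of i]] sum_nonneg) auto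
  then show "\<exists>N0. \<forall>k\<ge>N0. norm (norm ((A ^\<^sub>m k) $$ (i,j) / fact k)) \<le> (N * M) ^ k / fact k"
    using index_pow_mat_bound[OF A _ ij] by (auto simp: norm_divide intro!: divide_right_mono)
  show "summable (\<lambda>k. (N * M) ^ k / fact k)"
    using summable_exp_generic[of "N * M"] by (simp add: divide_inverse mult.commute)
qed

lemma exp_series_sums: "(\<lambda>k. z ^ k / fact k) sums exp (z :: complex)"
  using exp_converges[of z] by (simp add: scaleR_conv_of_real divide_inverse mult.commute)

lemma mexp_unit_column:
  fixes A :: "complex mat"
  assumes A: "A \<in> carrier_mat N N" and x: "x < N"
    and col: "\<And>r. r < N \<Longrightarrow> A $$ (r,x) = (if r = x then \<mu> else 0)"
    and r: "r < N"
  shows "mexp A $$ (r,x) = (if r = x then exp \<mu> else 0)"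
proof -
  have pow: "(A ^\<^sub>m k) $$ (r,x) = (if r = x then \<mu> ^ k else 0)" if "r < N" for k r
    using that
  proof (induction k arbitrary: r)
    case 0
    then show ?case using A x by simp
  next
    case (Suc k)
    have "(A ^\<^sub>m Suc k) $$ (r,x) = (\<Sum>s<N. (A ^\<^sub>m k) $$ (r,s) * A $$ (s,x))"
      unfolding pow_mat.simps(2) using Suc.prems A x by (subst index_mult_mat_sum) auto
    also have "\<dots> = (\<Sum>s<N. if s = x then (A ^\<^sub>m k) $$ (r,x) * \<mu> else 0)"
      using col by (intro sum.cong) auto
    also have "\<dots> = (A ^\<^sub>m k) $$ (r,x) * \<mu>"
      using x by simp
    finally show ?case using Suc by simp
  qed
  show ?thesis
    using index_mexp[OF A r x] pow[OF r] sums_unique[OF exp_series_sums[of \<mu>]] by simp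
qed

lemma mexp_zero_mat: "mexp (0\<^sub>m N N) = 1\<^sub>m N"
proof (rule eq_matI)
  fix i j assume "i < dim_row (1\<^sub>m N)" "j < dim_col (1\<^sub>m N)"
  then show "mexp (0\<^sub>m N N) $$ (i,j) = 1\<^sub>m N $$ (i,j)"
    using mexp_unit_column[of "0\<^sub>m N N" N j 0 i] by auto
qed simp_all

lemma pow_mat_involution:
  assumes G: "G \<in> carrier_mat N N" and GG: "G * G = 1\<^sub>m N"
  shows "G ^\<^sub>m k = (if even k then 1\<^sub>m N else G)"
  by (induction k) (use G GG in auto)

lemma mexp_smult_involution:
  fixes G :: "complex mat"
  assumes G: "G \<in> carrier_mat N N" and GG: "G * G = 1\<^sub>m N"
  shows "mexp (z \<cdot>\<^sub>m G) = cosh z \<cdot>\<^sub>m 1\<^sub>m N + sinh z \<cdot>\<^sub>m G"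
proof (rule eq_matI)
  fix i j
  assume "i < dim_row (cosh z \<cdot>\<^sub>m 1\<^sub>m N + sinh z \<cdot>\<^sub>m G)"
    and "j < dim_col (cosh z \<cdot>\<^sub>m 1\<^sub>m N + sinh z \<cdot>\<^sub>m G)"
  then have ij: "i < N" "j < N" using G by auto
  define d :: complex where "d = (if i = j then 1 else 0)"
  have series_term: "((z \<cdot>\<^sub>m G) ^\<^sub>m k) $$ (i,j) / fact k =
      d * (if even k then z ^ k /\<^sub>R fact k else 0) + G $$ (i,j) * (if even k then 0 else z ^ k /\<^sub>R fact k)" for k
    using G ij by (simp add: pow_mat_smult[OF G] pow_mat_involution[OF G GG] d_def scaleR_conv_of_real divide_inverse)
  have "(\<lambda>k. ((z \<cdot>\<^sub>m G) ^\<^sub>m k) $$ (i,j) / fact k) sums (d * cosh z + G $$ (i,j) * sinh z)"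
    unfolding series_term by (intro sums_add sums_mult cosh_converges sinh_converges)
  then have "mexp (z \<cdot>\<^sub>m G) $$ (i,j) = d * cosh z + G $$ (i,j) * sinh z"
    using G ij by (simp only: index_mexp[of _ N] smult_carrier_mat sums_unique[symmetric])
  then show "mexp (z \<cdot>\<^sub>m G) $$ (i,j) = (cosh z \<cdot>\<^sub>m 1\<^sub>m N + sinh z \<cdot>\<^sub>m G) $$ (i,j)"
    using G ij by (simp add: d_def)
qed (use G in simp_all)

lemma cosh_minus_imag: "cosh (- \<i> * complex_of_real s) = complex_of_real (cos s)"
  by (simp add: cosh_field_def cis_conv_exp[symmetric] complex_eq_iff Re_exp Im_exp)

lemma sinh_minus_imag: "sinh (- \<i> * complex_of_real s) = - \<i> * complex_of_real (sin s)"
  by (simp add: sinh_field_def cis_conv_exp[symmetric] complex_eq_iff Re_exp Im_exp)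

lemma mexp_quarter_period_involution:
  fixes G :: "complex mat"
  assumes G: "G \<in> carrier_mat N N" and GG: "G * G = 1\<^sub>m N"
  shows "mexp ((- \<i> * complex_of_real (pi / 2)) \<cdot>\<^sub>m G) = (- \<i>) \<cdot>\<^sub>m G"
  unfolding mexp_smult_involution[OF G GG] cosh_minus_imag sinh_minus_imag
  using G by (auto intro!: eq_matI)

lemma pow_mat_commute:
  fixes X Y :: "'a :: semiring_1 mat"
  assumes X: "X \<in> carrier_mat N N" and Y: "Y \<in> carrier_mat N N" and XY: "X * Y = Y * X"
  shows "Y ^\<^sub>m k * X = X * Y ^\<^sub>m k"
proof (induction k)
  case 0
  show ?case using X Y by simp
next
  case (Suc k)
  have Yk: "Y ^\<^sub>m k \<in> carrier_mat N N" using Y by simp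
  have "Y ^\<^sub>m Suc k * X = Y ^\<^sub>m k * (X * Y)" using assoc_mult_mat[OF Yk Y X] XY by simp
  also have "\<dots> = (Y ^\<^sub>m k * X) * Y" using assoc_mult_mat[OF Yk X Y] by simp
  also have "\<dots> = X * Y ^\<^sub>m Suc k" using assoc_mult_mat[OF X Yk Y] Suc by simp
  finally show ?case .
qed

lemma binomial_sum_Suc:
  fixes f :: "nat \<Rightarrow> nat \<Rightarrow> 'a :: comm_semiring_1"
  shows "(\<Sum>a\<le>k. of_nat (k choose a) * (f (Suc a) (k - a) + f a (Suc k - a))) =
         (\<Sum>a\<le>Suc k. of_nat (Suc k choose a) * f a (Suc k - a))"
proof -
  have shift: "(\<Sum>a\<le>k. of_nat (k choose a) * f a (Suc k - a)) =
      f 0 (Suc k) + (\<Sum>a\<le>k. of_nat (k choose Suc a) * f (Suc a) (k - a))"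
  proof (cases k)
    case (Suc k')
    have "(\<Sum>a\<le>k. of_nat (k choose a) * f a (Suc k - a)) =
        f 0 (Suc k) + (\<Sum>a\<le>k'. of_nat (k choose Suc a) * f (Suc a) (k - a))"
      unfolding Suc by (subst sum.atMost_Suc_shift) simp
    then show ?thesis
      using Suc by (simp add: binomial_eq_0)
  qed simp
  show ?thesis
    by (subst sum.atMost_Suc_shift) (simp add: sum.distrib algebra_simps shift)
qed

lemma index_pow_mat_add_commuting:
  fixes X Y :: "'a :: comm_semiring_1 mat"
  assumes X: "X \<in> carrier_mat N N" and Y: "Y \<in> carrier_mat N N" and XY: "X * Y = Y * X"
    and ij: "i < N" "j < N"
  shows "((X + Y) ^\<^sub>m k) $$ (i,j) = (\<Sum>a\<le>k. of_nat (k choose a) * (X ^\<^sub>m a * Y ^\<^sub>m (k - a)) $$ (i,j))"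
  using ij(2)
proof (induction k arbitrary: j)
  case 0
  then show ?case using X Y by simp
next
  case (Suc k)
  define P where "P a b = X ^\<^sub>m a * Y ^\<^sub>m b" for a b
  have P: "P a b \<in> carrier_mat N N" for a b
    unfolding P_def using X Y by (intro mult_carrier_mat[of _ N N _ N] pow_carrier_mat)
  have step: "P a b * (X + Y) = P (Suc a) b + P a (Suc b)" for a b
  proof -
    have "P a b * X = P (Suc a) b"
      using X Y pow_mat_commute[OF X Y XY] by (simp add: P_def assoc_mult_mat[of _ N N _ N _ N])
    moreover have "P a b * Y = P a (Suc b)"
      using X Y by (simp add: P_def assoc_mult_mat[of _ N N _ N _ N])
    ultimately show ?thesis using mult_add_distrib_mat[OF P X Y] by simp
  qed
  have "((X + Y) ^\<^sub>m Suc k) $$ (i,j) = (\<Sum>r<N. ((X + Y) ^\<^sub>m k) $$ (i,r) * (X + Y) $$ (r,j))"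
    unfolding pow_mat.simps(2) using X Y Suc.prems ij by (subst index_mult_mat_sum) auto
  also have "\<dots> = (\<Sum>a\<le>k. of_nat (k choose a) * (\<Sum>r<N. P a (k - a) $$ (i,r) * (X + Y) $$ (r,j)))"
    using Suc by (simp add: P_def sum_distrib_right sum_distrib_left ac_simps sum.swap[of _ "{..<N}"])
  also have "\<dots> = (\<Sum>a\<le>k. of_nat (k choose a) * (P (Suc a) (k - a) $$ (i,j) + P a (Suc k - a) $$ (i,j)))"
  proof (intro sum.cong refl arg_cong2[where f = "(*)"])
    fix a assume "a \<in> {..k}"
    then have "Suc (k - a) = Suc k - a" by auto
    then show "(\<Sum>r<N. P a (k - a) $$ (i,r) * (X + Y) $$ (r,j)) = P (Suc a) (k - a) $$ (i,j) + P a (Suc k - a) $$ (i,j)"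
      using index_mult_mat_sum[OF P _ ij(1) Suc.prems, of "X + Y" a "k - a"] X Y Suc.prems ij(1)
        P[of "Suc a" "k - a"] P[of a "Suc k - a"]
      by (simp add: step)
  qed
  also have "\<dots> = (\<Sum>a\<le>Suc k. of_nat (Suc k choose a) * P a (Suc k - a) $$ (i,j))"
    by (rule binomial_sum_Suc)
  finally show ?case by (simp add: P_def)
qed

lemma mexp_add_commuting:
  fixes X Y :: "complex mat"
  assumes X: "X \<in> carrier_mat N N" and Y: "Y \<in> carrier_mat N N" and XY: "X * Y = Y * X"
  shows "mexp (X + Y) = mexp X * mexp Y"
proof (rule eq_matI)
  fix i j assume "i < dim_row (mexp X * mexp Y)" "j < dim_col (mexp X * mexp Y)"
  then have ij: "i < N" "j < N" using X Y by auto
  define x where "x r = (\<lambda>k. (X ^\<^sub>m k) $$ (i,r) / fact k)" for r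
  define y where "y r = (\<lambda>k. (Y ^\<^sub>m k) $$ (r,j) / fact k)" for r
  have product: "(mexp X * mexp Y) $$ (i,j) = (\<Sum>r<N. suminf (x r) * suminf (y r))"
    using X Y ij by (subst index_mult_mat_sum[of _ N]) (simp_all add: index_mexp[of _ N] x_def y_def)
  have cauchy: "(\<lambda>k. \<Sum>r<N. \<Sum>a\<le>k. x r a * y r (k - a)) sums (\<Sum>r<N. suminf (x r) * suminf (y r))"
    using X Y ij
    by (intro sums_sum Cauchy_product_sums) (auto simp: x_def y_def summable_index_mexp_series)
  have "(\<Sum>r<N. \<Sum>a\<le>k. x r a * y r (k - a)) = ((X + Y) ^\<^sub>m k) $$ (i,j) / fact k" for k
  proof -
    have "(\<Sum>r<N. \<Sum>a\<le>k. x r a * y r (k - a)) =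
        (\<Sum>a\<le>k. (\<Sum>r<N. (X ^\<^sub>m a) $$ (i,r) * (Y ^\<^sub>m (k - a)) $$ (r,j)) / (fact a * fact (k - a)))"
      by (subst sum.swap) (simp add: x_def y_def sum_divide_distrib)
    also have "\<dots> = (\<Sum>a\<le>k. (X ^\<^sub>m a * Y ^\<^sub>m (k - a)) $$ (i,j) / (fact a * fact (k - a)))"
      using X Y ij by (simp only: index_mult_mat_sum[of _ N] pow_carrier_mat)
    also have "\<dots> = (\<Sum>a\<le>k. of_nat (k choose a) * (X ^\<^sub>m a * Y ^\<^sub>m (k - a)) $$ (i,j)) / fact k"
      unfolding sum_divide_distrib
      by (intro sum.cong refl) (simp add: binomial_fact field_simps)
    finally show ?thesis
      using index_pow_mat_add_commuting[OF X Y XY ij] by simp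
  qed
  then show "mexp (X + Y) $$ (i,j) = (mexp X * mexp Y) $$ (i,j)"
    using X Y ij cauchy by (simp add: index_mexp[of _ N] product sums_iff)
qed (use X Y in simp_all)

section \<open>Eigenvalues and the spread\<close>

lemma nonzero_vec_entry:
  assumes "v \<in> carrier_vec N" "v \<noteq> 0\<^sub>v N"
  obtains i where "i < N" "v $ i \<noteq> 0"
proof -
  have "\<exists>i<N. v $ i \<noteq> 0"
  proof (rule ccontr)
    assume "\<not> (\<exists>i<N. v $ i \<noteq> 0)"
    then have "v = 0\<^sub>v N" using assms(1) by (intro eq_vecI) auto
    then show False using assms(2) by contradiction
  qed
  then show ?thesis using that by blast
qed

lemma eigenvalueI_vec:
  fixes A :: "complex mat"
  assumes A: "A \<in> carrier_mat N N" and v: "v \<in> carrier_vec N" "y < N" "v $ y \<noteq> 0"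
    and eigen: "A *\<^sub>v v = \<mu> \<cdot>\<^sub>v v"
  shows "eigenvalue A \<mu>"
proof -
  have "v \<noteq> 0\<^sub>v N"
    using v(2,3) by (metis index_zero_vec(1))
  then show ?thesis
    unfolding eigenvalue_def eigenvector_def using A v(1) eigen by auto
qed

lemma eigenvalue_unit_column:
  fixes A :: "complex mat"
  assumes A: "A \<in> carrier_mat N N" and x: "x < N"
    and col: "\<And>r. r < N \<Longrightarrow> A $$ (r,x) = (if r = x then \<mu> else 0)"
  shows "eigenvalue A \<mu>"
  by (rule eigenvalueI_vec[OF A _ x, of "unit_vec N x"])
    (use A x col in \<open>auto intro!: eq_vecI simp: scalar_prod_right_unit\<close>)

lemma finite_eigenvalues: "(A :: complex mat) \<in> carrier_mat N N \<Longrightarrow> finite {k. eigenvalue A k}"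
  using card_finite_spectrum(1)[of A N] by (simp add: spectrum_def)

lemma eigenvalues_nonempty:
  "(A :: complex mat) \<in> carrier_mat N N \<Longrightarrow> 0 < N \<Longrightarrow> {k. eigenvalue A k} \<noteq> {}"
  using spectrum_non_empty[of A N] by (simp add: spectrum_def)

lemma eigenvalue_smult:
  fixes A :: "complex mat"
  assumes A: "A \<in> carrier_mat N N" and "eigenvalue A k"
  shows "eigenvalue (c \<cdot>\<^sub>m A) (c * k)"
proof -
  obtain v where v: "v \<in> carrier_vec N" "v \<noteq> 0\<^sub>v N" "A *\<^sub>v v = k \<cdot>\<^sub>v v"
    using assms by (auto simp: eigenvalue_def eigenvector_def)
  have "(c \<cdot>\<^sub>m A) *\<^sub>v v = c \<cdot>\<^sub>v (A *\<^sub>v v)"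
    using A v(1) by (auto intro!: eq_vecI simp: scalar_prod_def sum_distrib_left ac_simps)
  then have "(c \<cdot>\<^sub>m A) *\<^sub>v v = (c * k) \<cdot>\<^sub>v v"
    using v by (simp add: smult_smult_assoc)
  then show ?thesis using A v by (auto simp: eigenvalue_def eigenvector_def)
qed

lemma eigenvalues_smult:
  fixes A :: "complex mat"
  assumes A: "A \<in> carrier_mat N N" and c: "c \<noteq> 0"
  shows "{k. eigenvalue (c \<cdot>\<^sub>m A) k} = (\<lambda>k. c * k) ` {k. eigenvalue A k}"
proof (intro equalityI subsetI)
  fix k assume "k \<in> {k. eigenvalue (c \<cdot>\<^sub>m A) k}"
  then have "eigenvalue ((1 / c) \<cdot>\<^sub>m (c \<cdot>\<^sub>m A)) (k / c)"
    using eigenvalue_smult[of "c \<cdot>\<^sub>m A" N k "1 / c"] A by simp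
  moreover have "(1 / c) \<cdot>\<^sub>m (c \<cdot>\<^sub>m A) = A" using c by (auto simp: smult_smult_mat)
  ultimately show "k \<in> (\<lambda>k. c * k) ` {k. eigenvalue A k}"
    using c by (auto intro!: image_eqI[of _ _ "k / c"])
qed (use eigenvalue_smult[OF A] in auto)

lemma spread_smult:
  fixes A :: "complex mat"
  assumes A: "A \<in> carrier_mat N N" and N: "0 < N" and c: "0 < c"
  shows "spread (complex_of_real c \<cdot>\<^sub>m A) = c * spread A"
proof -
  define E where "E = Re ` {k. eigenvalue A k}"
  have E: "finite E" "E \<noteq> {}"
    unfolding E_def using finite_eigenvalues[OF A] eigenvalues_nonempty[OF A N] by auto
  have "{k. eigenvalue (complex_of_real c \<cdot>\<^sub>m A) k} = (\<lambda>k. complex_of_real c * k) ` {k. eigenvalue A k}"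
    using eigenvalues_smult[OF A] c by simp
  then have "Re ` {k. eigenvalue (complex_of_real c \<cdot>\<^sub>m A) k} = (\<lambda>r. c * r) ` E"
    unfolding E_def by (simp add: image_image)
  moreover have "mono (\<lambda>r. c * r)" using c by (auto intro: monoI)
  ultimately show ?thesis
    unfolding spread_def E_def[symmetric] by (simp add: mono_Max_commute mono_Min_commute E right_diff_distrib)
qed

lemma spread_ge:
  fixes A :: "complex mat"
  assumes A: "A \<in> carrier_mat N N" and "eigenvalue A a" "eigenvalue A b"
  shows "Re a - Re b \<le> spread A"
  using assms finite_eigenvalues[OF A] unfolding spread_def
  by (intro diff_mono Max_ge Min_le) auto

lemma eigenvalue_involution:
  fixes G :: "complex mat"
  assumes G: "G \<in> carrier_mat N N" and GG: "G * G = 1\<^sub>m N" and "eigenvalue G \<mu>"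
  shows "\<mu> = 1 \<or> \<mu> = -1"
proof -
  obtain v where v: "v \<in> carrier_vec N" "v \<noteq> 0\<^sub>v N" "G *\<^sub>v v = \<mu> \<cdot>\<^sub>v v"
    using assms by (auto simp: eigenvalue_def eigenvector_def)
  have "v = (G * G) *\<^sub>v v" using GG v(1) by simp
  also have "\<dots> = G *\<^sub>v (G *\<^sub>v v)" by (rule assoc_mult_mat_vec[OF G G v(1)])
  also have "\<dots> = (\<mu> * \<mu>) \<cdot>\<^sub>v v" using G v(1) by (simp add: v(3) mult_mat_vec smult_smult_assoc)
  finally have vv: "v = (\<mu> * \<mu>) \<cdot>\<^sub>v v" .
  obtain i where i: "i < N" "v $ i \<noteq> 0"
    using nonzero_vec_entry[OF v(1,2)] .
  have "v $ i = ((\<mu> * \<mu>) \<cdot>\<^sub>v v) $ i" using vv by (rule arg_cong)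
  also have "\<dots> = \<mu> * \<mu> * v $ i" using i v(1) by simp
  finally have "(\<mu> * \<mu> - 1) * v $ i = 0" by (simp add: algebra_simps)
  then have "(\<mu> - 1) * (\<mu> + 1) = 0" using i by (simp add: algebra_simps)
  then show ?thesis by (simp add: eq_neg_iff_add_eq_0)
qed

lemma spread_involution:
  fixes G :: "complex mat"
  assumes G: "G \<in> carrier_mat N N" and GG: "G * G = 1\<^sub>m N" and N: "0 < N"
  shows "spread G \<le> 2"
proof -
  define E where "E = Re ` {k. eigenvalue G k}"
  have E: "finite E" "E \<noteq> {}"
    unfolding E_def using finite_eigenvalues[OF G] eigenvalues_nonempty[OF G N] by auto
  have "E \<subseteq> {1, -1}"
    unfolding E_def using eigenvalue_involution[OF G GG] by fastforce
  then have "Max E \<le> 1" "-1 \<le> Min E" using E by auto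
  then show ?thesis unfolding spread_def E_def[symmetric] by simp
qed

section \<open>Toffoli gates as permutations of basis states\<close>

lemma less_power_if_bits: "(\<And>i. bit (x :: nat) i \<Longrightarrow> i < n) \<Longrightarrow> x < 2 ^ n"
proof -
  assume "\<And>i. bit x i \<Longrightarrow> i < n"
  then have "take_bit n x = x" by (intro bit_eqI) (auto simp: bit_take_bit_iff)
  then show ?thesis by (simp add: take_bit_nat_eq_self_iff)
qed

lemma bit_less_if_less_power: "(x :: nat) < 2 ^ n \<Longrightarrow> bit x i \<Longrightarrow> i < n"
  by (metis bit_take_bit_iff take_bit_nat_eq_self)

lemma flip_bit_less: "c < n \<Longrightarrow> (x :: nat) < 2 ^ n \<Longrightarrow> flip_bit c x < 2 ^ n"
  by (rule less_power_if_bits) (auto simp: bit_flip_bit_iff dest: bit_less_if_less_power split: if_splits)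

lemma flip_bit_neq: "flip_bit c (x :: nat) \<noteq> x"
proof
  assume "flip_bit c x = x"
  then have "bit (flip_bit c x) c = bit x c" by simp
  then show False by (simp add: bit_flip_bit_iff)
qed

lemma flip_bit_flip_bit [simp]: "flip_bit c (flip_bit c (x :: nat)) = x"
  by (rule bit_eqI) (auto simp: bit_flip_bit_iff)

lemma bit_toffoli_fun:
  "bit (toffoli_fun (a,b,c) y) i \<longleftrightarrow> (if i = c \<and> bit y a \<and> bit y b then \<not> bit y i else bit y i)"
  by (auto simp: toffoli_fun_def bit_flip_bit_iff)

lemma toffoli_fun_less: "valid_gate n g \<Longrightarrow> x < 2 ^ n \<Longrightarrow> toffoli_fun g x < 2 ^ n"
  by (cases g) (simp add: valid_gate_def toffoli_fun_def flip_bit_less)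

lemma toffoli_fun_toffoli_fun: "valid_gate n g \<Longrightarrow> toffoli_fun g (toffoli_fun g x) = x"
  by (cases g) (auto simp: valid_gate_def toffoli_fun_def bit_flip_bit_iff)

lemma toffoli_fun_commute:
  assumes "gate_bits g \<inter> gate_bits h = {}"
  shows "toffoli_fun g (toffoli_fun h x) = toffoli_fun h (toffoli_fun g x)"
proof -
  obtain a b c a' b' c' where "g = (a,b,c)" "h = (a',b',c')" by (cases g, cases h)
  then show ?thesis
    using assms by (intro bit_eqI) (auto simp: gate_bits_def bit_toffoli_fun)
qed

lemma toffoli_fun_fixed: "\<not> bit y (fst g) \<Longrightarrow> toffoli_fun g y = y"
  by (cases g) (simp add: toffoli_fun_def)

lemma toffoli_fun_0 [simp]: "toffoli_fun g 0 = 0"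
  by (cases g) (simp add: toffoli_fun_def)

definition disjoint_gates :: "nat \<Rightarrow> layer \<Rightarrow> bool" where
  "disjoint_gates n L \<longleftrightarrow>
     (\<forall>g\<in>set L. valid_gate n g) \<and> sorted_wrt (\<lambda>g h. gate_bits g \<inter> gate_bits h = {}) L"

lemma disjoint_gates_Nil [simp]: "disjoint_gates n []"
  by (simp add: disjoint_gates_def)

lemma disjoint_gates_Cons [simp]:
  "disjoint_gates n (g # L) \<longleftrightarrow>
     valid_gate n g \<and> (\<forall>h\<in>set L. gate_bits g \<inter> gate_bits h = {}) \<and> disjoint_gates n L"
  by (auto simp: disjoint_gates_def)

lemma valid_layer_disjoint_gates: "valid_layer n L \<Longrightarrow> disjoint_gates n L"
  unfolding valid_layer_def disjoint_gates_def sorted_wrt_iff_nth_less by auto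

lemma layer_fun_Nil [simp]: "layer_fun [] = id"
  by (auto simp: layer_fun_def)

lemma layer_fun_Cons [simp]: "layer_fun (g # L) = layer_fun L \<circ> toffoli_fun g"
  by (auto simp: layer_fun_def)

lemma layer_fun_less: "\<forall>g\<in>set L. valid_gate n g \<Longrightarrow> x < 2 ^ n \<Longrightarrow> layer_fun L x < 2 ^ n"
  by (induction L arbitrary: x) (auto simp: toffoli_fun_less)

lemma layer_fun_toffoli_fun:
  "\<forall>h\<in>set L. gate_bits g \<inter> gate_bits h = {} \<Longrightarrow>
   layer_fun L (toffoli_fun g x) = toffoli_fun g (layer_fun L x)"
proof (induction L arbitrary: x)
  case (Cons h L)
  then have "toffoli_fun h (toffoli_fun g x) = toffoli_fun g (toffoli_fun h x)"
    using toffoli_fun_commute[of h g x] by (simp add: Int_commute)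
  with Cons show ?case by simp
qed simp

lemma layer_fun_layer_fun: "disjoint_gates n L \<Longrightarrow> layer_fun L (layer_fun L x) = x"
proof (induction L arbitrary: x)
  case (Cons g L)
  then have "layer_fun (g # L) (layer_fun (g # L) x) =
      layer_fun L (layer_fun L (toffoli_fun g (toffoli_fun g x)))"
    by (simp add: layer_fun_toffoli_fun)
  also have "\<dots> = x"
    using Cons toffoli_fun_toffoli_fun[of n g x] by simp
  finally show ?case .
qed simp

lemma layer_fun_fixed: "(\<And>h. h \<in> set L \<Longrightarrow> toffoli_fun h y = y) \<Longrightarrow> layer_fun L y = y"
  by (induction L) auto

section \<open>Permutation matrices of layers\<close>

lemma dim_perm_mat [simp]: "dim_row (perm_mat n f) = 2 ^ n" "dim_col (perm_mat n f) = 2 ^ n"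
  by (simp_all add: perm_mat_def)

lemma perm_mat_carrier [simp]: "perm_mat n f \<in> carrier_mat (2 ^ n) (2 ^ n)"
  by (simp add: perm_mat_def)

lemma index_perm_mat:
  "i < 2 ^ n \<Longrightarrow> j < 2 ^ n \<Longrightarrow> perm_mat n f $$ (i,j) = (if i = f j then 1 else 0)"
  by (simp add: perm_mat_def)

lemma perm_mat_id: "perm_mat n id = 1\<^sub>m (2 ^ n)"
  by (rule eq_matI) (auto simp: perm_mat_def)

lemma perm_mat_mult:
  assumes g: "\<And>j. j < 2 ^ n \<Longrightarrow> g j < 2 ^ n"
  shows "perm_mat n f * perm_mat n g = perm_mat n (f \<circ> g)"
proof (rule eq_matI)
  fix i j assume "i < dim_row (perm_mat n (f \<circ> g))" "j < dim_col (perm_mat n (f \<circ> g))"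
  then have ij: "i < 2 ^ n" "j < 2 ^ n" by (auto simp: perm_mat_def)
  have "(perm_mat n f * perm_mat n g) $$ (i,j) = (\<Sum>r<2 ^ n. perm_mat n f $$ (i,r) * perm_mat n g $$ (r,j))"
    using ij by (intro index_mult_mat_sum) auto
  also have "\<dots> = (\<Sum>r<2 ^ n. if r = g j then (if i = f r then 1 else 0) else 0)"
    using ij by (intro sum.cong) (auto simp: index_perm_mat)
  also have "\<dots> = perm_mat n (f \<circ> g) $$ (i,j)"
    using ij g[OF ij(2)] by (simp add: index_perm_mat)
  finally show "(perm_mat n f * perm_mat n g) $$ (i,j) = perm_mat n (f \<circ> g) $$ (i,j)" .
qed (auto simp: perm_mat_def)

lemma perm_mat_involution:
  assumes "\<And>j. j < 2 ^ n \<Longrightarrow> f j < 2 ^ n" "\<And>j. f (f j) = j"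
  shows "perm_mat n f * perm_mat n f = 1\<^sub>m (2 ^ n)"
  using assms by (simp add: perm_mat_mult comp_def perm_mat_id[symmetric] id_def)

lemma index_perm_mat_mult_vec:
  assumes "\<And>j. j < 2 ^ n \<Longrightarrow> f j < 2 ^ n" "\<And>j. f (f j) = j"
    and w: "w \<in> carrier_vec (2 ^ n)" and y: "y < 2 ^ n"
  shows "(perm_mat n f *\<^sub>v w) $ y = w $ f y"
proof -
  have "(perm_mat n f *\<^sub>v w) $ y = (\<Sum>r<2 ^ n. perm_mat n f $$ (y,r) * w $ r)"
    using w y by (simp add: scalar_prod_def lessThan_atLeast0 perm_mat_def)
  also have "\<dots> = (\<Sum>r<2 ^ n. if r = f y then w $ r else 0)"
    using assms y by (intro sum.cong) (auto simp: index_perm_mat)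
  also have "\<dots> = w $ f y" using assms y by simp
  finally show ?thesis .
qed

lemma hermitian_smult_perm_mat:
  "(\<And>j. f (f j) = j) \<Longrightarrow> hermitian_mat (complex_of_real c \<cdot>\<^sub>m perm_mat n f)"
  unfolding hermitian_mat_def by (auto simp: perm_mat_def)

lemma toffoli_mat_carrier [simp]: "toffoli_mat n g \<in> carrier_mat (2 ^ n) (2 ^ n)"
  by (simp add: toffoli_mat_def)

lemma gates_sum_Nil [simp]: "gates_sum n [] = 0\<^sub>m (2 ^ n) (2 ^ n)"
  by (simp add: gates_sum_def)

lemma gates_sum_Cons [simp]: "gates_sum n (g # L) = toffoli_mat n g + gates_sum n L"
  by (simp add: gates_sum_def)

lemma gates_prod_Nil [simp]: "gates_prod n [] = 1\<^sub>m (2 ^ n)"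
  by (simp add: gates_prod_def)

lemma gates_prod_Cons [simp]: "gates_prod n (g # L) = toffoli_mat n g * gates_prod n L"
  by (simp add: gates_prod_def)

lemma gates_sum_carrier [simp]: "gates_sum n L \<in> carrier_mat (2 ^ n) (2 ^ n)"
  by (induction L) auto

lemma dim_gates_sum [simp]: "dim_row (gates_sum n L) = 2 ^ n" "dim_col (gates_sum n L) = 2 ^ n"
  using carrier_matD[OF gates_sum_carrier[of n L]] by simp_all

lemma gates_prod_carrier [simp]: "gates_prod n L \<in> carrier_mat (2 ^ n) (2 ^ n)"
  by (induction L) (auto intro!: mult_carrier_mat[of _ "2 ^ n" "2 ^ n"])

lemma toffoli_mat_involution: "valid_gate n g \<Longrightarrow> toffoli_mat n g * toffoli_mat n g = 1\<^sub>m (2 ^ n)"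
  unfolding toffoli_mat_def
  by (intro perm_mat_involution toffoli_fun_less toffoli_fun_toffoli_fun)

lemma toffoli_mat_commute:
  assumes "valid_gate n g" "valid_gate n h" "gate_bits g \<inter> gate_bits h = {}"
  shows "toffoli_mat n g * toffoli_mat n h = toffoli_mat n h * toffoli_mat n g"
proof -
  have "toffoli_fun g \<circ> toffoli_fun h = toffoli_fun h \<circ> toffoli_fun g"
    using toffoli_fun_commute[OF assms(3)] by auto
  then show ?thesis
    unfolding toffoli_mat_def using assms by (simp add: perm_mat_mult toffoli_fun_less)
qed

lemma toffoli_mat_commute_gates_sum:
  assumes "valid_gate n g" "\<forall>h\<in>set L. valid_gate n h \<and> gate_bits g \<inter> gate_bits h = {}"
  shows "toffoli_mat n g * gates_sum n L = gates_sum n L * toffoli_mat n g"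
  using assms(2)
proof (induction L)
  case Nil
  then show ?case
    using left_mult_zero_mat[OF toffoli_mat_carrier] right_mult_zero_mat[OF toffoli_mat_carrier] by simp
next
  case (Cons h L)
  have "toffoli_mat n g * gates_sum n (h # L) = toffoli_mat n g * toffoli_mat n h + toffoli_mat n g * gates_sum n L"
    by (simp add: mult_add_distrib_mat[OF toffoli_mat_carrier toffoli_mat_carrier gates_sum_carrier])
  also have "\<dots> = toffoli_mat n h * toffoli_mat n g + gates_sum n L * toffoli_mat n g"
    using Cons toffoli_mat_commute[OF assms(1)] by simp
  also have "\<dots> = gates_sum n (h # L) * toffoli_mat n g"
    by (simp add: add_mult_distrib_mat[OF toffoli_mat_carrier gates_sum_carrier toffoli_mat_carrier])
  finally show ?case .
qed

lemma gates_prod_eq_perm_mat: "disjoint_gates n L \<Longrightarrow> gates_prod n L = perm_mat n (layer_fun L)"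
proof (induction L)
  case Nil
  then show ?case by (simp add: perm_mat_id[symmetric] id_def)
next
  case (Cons g L)
  then have "gates_prod n (g # L) = perm_mat n (toffoli_fun g \<circ> layer_fun L)"
    by (simp add: toffoli_mat_def perm_mat_mult layer_fun_less disjoint_gates_def)
  also have "toffoli_fun g \<circ> layer_fun L = layer_fun (g # L)"
    using Cons.prems by (auto simp: layer_fun_toffoli_fun)
  finally show ?case .
qed

lemma gates_prod_involution:
  assumes "disjoint_gates n L"
  shows "gates_prod n L * gates_prod n L = 1\<^sub>m (2 ^ n)"
  unfolding gates_prod_eq_perm_mat[OF assms]
  by (rule perm_mat_involution)
    (use assms layer_fun_layer_fun in \<open>auto simp: disjoint_gates_def layer_fun_less\<close>)

lemma index_gates_sum_fixed_column:
  assumes "\<And>h. h \<in> set L \<Longrightarrow> toffoli_fun h x = x" "x < 2 ^ n" "r < 2 ^ n"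
  shows "gates_sum n L $$ (r,x) = (if r = x then of_nat (length L) else 0)"
  using assms(1)
proof (induction L)
  case (Cons h L)
  then show ?case using assms(2,3) by (simp add: toffoli_mat_def index_perm_mat)
qed (use assms in simp)

lemma index_gates_sum_mult_vec:
  assumes "\<forall>h\<in>set L. valid_gate n h" "w \<in> carrier_vec (2 ^ n)" "y < 2 ^ n"
  shows "(gates_sum n L *\<^sub>v w) $ y = (\<Sum>h\<leftarrow>L. w $ toffoli_fun h y)"
  using assms(1)
proof (induction L)
  case (Cons h L)
  have "gates_sum n (h # L) *\<^sub>v w = toffoli_mat n h *\<^sub>v w + gates_sum n L *\<^sub>v w"
    using assms(2) by (simp add: add_mult_distrib_mat_vec[of _ "2 ^ n" "2 ^ n"])
  moreover have "(toffoli_mat n h *\<^sub>v w) $ y = w $ toffoli_fun h y"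
    unfolding toffoli_mat_def using Cons.prems assms(2,3)
    by (intro index_perm_mat_mult_vec) (auto simp: toffoli_fun_less toffoli_fun_toffoli_fun)
  ultimately show ?case
    using Cons assms(2,3) by simp
qed (use assms in simp)

section \<open>Spectrum and exponentials of a layer Hamiltonian\<close>

lemma eigenvalue_gates_sum_length:
  "disjoint_gates n L \<Longrightarrow> eigenvalue (gates_sum n L) (of_nat (length L))"
  by (rule eigenvalue_unit_column[OF gates_sum_carrier, of 0]) (auto simp: index_gates_sum_fixed_column)

text \<open>Amplitude of the basis state |y> in |110> - |111> on the triple (a,b,c) of the gate,
  the (-1)-eigenvector of that Toffoli gate. For a layer, the product of these amplitudes
  is a common (-1)-eigenvector of all its gates.\<close>
definition toffoli_minus_amp :: "gate \<Rightarrow> nat \<Rightarrow> complex" where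
  "toffoli_minus_amp g y =
     (case g of (a,b,c) \<Rightarrow> if bit y a \<and> bit y b then (if bit y c then -1 else 1) else 0)"

lemma toffoli_minus_amp_toffoli_fun:
  "valid_gate n g \<Longrightarrow> toffoli_minus_amp g (toffoli_fun g y) = - toffoli_minus_amp g y"
  by (cases g) (auto simp: valid_gate_def toffoli_minus_amp_def bit_toffoli_fun)

lemma toffoli_minus_amp_toffoli_fun_disjoint:
  "gate_bits g \<inter> gate_bits h = {} \<Longrightarrow> toffoli_minus_amp g (toffoli_fun h y) = toffoli_minus_amp g y"
  by (cases g; cases h) (auto simp: gate_bits_def toffoli_minus_amp_def bit_toffoli_fun)

lemma prod_toffoli_minus_amp_toffoli_fun:
  assumes "disjoint_gates n L" "h \<in> set L"
  shows "(\<Prod>g\<leftarrow>L. toffoli_minus_amp g (toffoli_fun h y)) = - (\<Prod>g\<leftarrow>L. toffoli_minus_amp g y)"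
  using assms
proof (induction L)
  case (Cons g L)
  show ?case
  proof (cases "h = g")
    case True
    have "(\<Prod>g'\<leftarrow>L. toffoli_minus_amp g' (toffoli_fun g y)) = (\<Prod>g'\<leftarrow>L. toffoli_minus_amp g' y)"
      using Cons.prems
      by (intro arg_cong[where f = prod_list] map_cong refl toffoli_minus_amp_toffoli_fun_disjoint)
        (auto simp: Int_commute)
    then show ?thesis
      using True Cons.prems toffoli_minus_amp_toffoli_fun[of n g y] by simp
  next
    case False
    then show ?thesis
      using Cons toffoli_minus_amp_toffoli_fun_disjoint[of g h y] by simp
  qed
qed simp

lemma eigenvalue_gates_sum_minus_length:
  assumes L: "disjoint_gates n L"
  shows "eigenvalue (gates_sum n L) (- of_nat (length L))"
proof -
  define w where "w = vec (2 ^ n) (\<lambda>y. \<Prod>g\<leftarrow>L. toffoli_minus_amp g y)"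
  define y0 :: nat where "y0 = mask n"
  have y0: "y0 < 2 ^ n" by (simp add: y0_def mask_nat_def)
  have "toffoli_minus_amp g y0 \<noteq> 0" if "g \<in> set L" for g
    using L that by (cases g) (auto simp: disjoint_gates_def valid_gate_def toffoli_minus_amp_def y0_def bit_mask_iff)
  then have "w $ y0 \<noteq> 0"
    using y0 by (auto simp: w_def prod_list_zero_iff)
  moreover have "gates_sum n L *\<^sub>v w = (- of_nat (length L)) \<cdot>\<^sub>v w"
  proof (rule eq_vecI)
    fix y assume "y < dim_vec ((- of_nat (length L)) \<cdot>\<^sub>v w)"
    then have y: "y < 2 ^ n" by (simp add: w_def)
    have "(gates_sum n L *\<^sub>v w) $ y = (\<Sum>h\<leftarrow>L. w $ toffoli_fun h y)"
      using L y by (intro index_gates_sum_mult_vec) (auto simp: disjoint_gates_def w_def)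
    also have "\<dots> = (\<Sum>h\<leftarrow>L. - w $ y)"
      using L y by (intro arg_cong[where f = sum_list] map_cong refl)
        (auto simp: w_def toffoli_fun_less disjoint_gates_def prod_toffoli_minus_amp_toffoli_fun)
    finally show "(gates_sum n L *\<^sub>v w) $ y = ((- of_nat (length L)) \<cdot>\<^sub>v w) $ y"
      using y by (simp add: w_def sum_list_triv)
  qed (simp add: w_def)
  ultimately show ?thesis
    by (intro eigenvalueI_vec[OF gates_sum_carrier _ y0]) (auto simp: w_def)
qed

lemma spread_gates_sum:
  "disjoint_gates n L \<Longrightarrow> 2 * real (length L) \<le> spread (gates_sum n L)"
  using spread_ge[OF gates_sum_carrier eigenvalue_gates_sum_length eigenvalue_gates_sum_minus_length]
  by simp

lemma mexp_smult_gates_sum_Cons: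
  assumes "disjoint_gates n (g # L)"
  shows "mexp (z \<cdot>\<^sub>m gates_sum n (g # L)) = mexp (z \<cdot>\<^sub>m toffoli_mat n g) * mexp (z \<cdot>\<^sub>m gates_sum n L)"
proof -
  have "toffoli_mat n g * gates_sum n L = gates_sum n L * toffoli_mat n g"
    using assms by (intro toffoli_mat_commute_gates_sum) (auto simp: disjoint_gates_def)
  then show ?thesis
    by (simp add: add_smult_distrib_left_mat[of _ "2 ^ n" "2 ^ n"] mexp_add_commuting[of _ "2 ^ n"]
        smult_mat_commute[of _ "2 ^ n"])
qed

lemma mexp_quarter_period_gates_sum:
  "disjoint_gates n L \<Longrightarrow>
   mexp ((- \<i> * complex_of_real (pi / 2)) \<cdot>\<^sub>m gates_sum n L) = (- \<i>) ^ length L \<cdot>\<^sub>m gates_prod n L"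
proof (induction L)
  case Nil
  then show ?case by (auto simp: mexp_zero_mat intro!: eq_matI)
next
  case (Cons g L)
  define z where "z = - \<i> * complex_of_real (pi / 2)"
  have "mexp (z \<cdot>\<^sub>m gates_sum n (g # L)) = mexp (z \<cdot>\<^sub>m toffoli_mat n g) * mexp (z \<cdot>\<^sub>m gates_sum n L)"
    by (rule mexp_smult_gates_sum_Cons[OF Cons.prems])
  also have "mexp (z \<cdot>\<^sub>m toffoli_mat n g) = (- \<i>) \<cdot>\<^sub>m toffoli_mat n g"
    unfolding z_def using Cons.prems
    by (intro mexp_quarter_period_involution[OF toffoli_mat_carrier] toffoli_mat_involution) simp
  also have "mexp (z \<cdot>\<^sub>m gates_sum n L) = (- \<i>) ^ length L \<cdot>\<^sub>m gates_prod n L"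
    unfolding z_def using Cons by simp
  also have "((- \<i>) \<cdot>\<^sub>m toffoli_mat n g) * ((- \<i>) ^ length L \<cdot>\<^sub>m gates_prod n L) =
      (- \<i>) ^ length (g # L) \<cdot>\<^sub>m gates_prod n (g # L)"
    by (simp add: smult_mult_smult_mat[OF toffoli_mat_carrier gates_prod_carrier])
  finally show ?case unfolding z_def .
qed

lemma index_mexp_smult_gates_sum_Cons:
  assumes L: "disjoint_gates n (g # L)" and x: "x < 2 ^ n"
    and moved: "toffoli_fun g x \<noteq> x" and fixed: "\<And>h. h \<in> set L \<Longrightarrow> toffoli_fun h x = x"
  shows "mexp (z \<cdot>\<^sub>m gates_sum n (g # L)) $$ (x,x) = cosh z * exp (z * of_nat (length L))"
proof -
  have g: "valid_gate n g" using L by simp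
  have col: "(z \<cdot>\<^sub>m gates_sum n L) $$ (r,x) = (if r = x then z * of_nat (length L) else 0)"
    if "r < 2 ^ n" for r
    using that x fixed by (simp add: index_gates_sum_fixed_column)
  have diag: "mexp (z \<cdot>\<^sub>m toffoli_mat n g) $$ (x,x) = cosh z"
    unfolding mexp_smult_involution[OF toffoli_mat_carrier toffoli_mat_involution[OF g]]
    using x moved by (simp add: toffoli_mat_def index_perm_mat)
  have column: "mexp (z \<cdot>\<^sub>m gates_sum n L) $$ (r,x) = (if r = x then exp (z * of_nat (length L)) else 0)"
    if "r < 2 ^ n" for r
    using mexp_unit_column[OF _ x col that] by simp
  have "mexp (z \<cdot>\<^sub>m gates_sum n (g # L)) $$ (x,x) =
      (\<Sum>r<2 ^ n. mexp (z \<cdot>\<^sub>m toffoli_mat n g) $$ (x,r) * mexp (z \<cdot>\<^sub>m gates_sum n L) $$ (r,x))"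
    unfolding mexp_smult_gates_sum_Cons[OF L] using x by (intro index_mult_mat_sum) auto
  also have "\<dots> = (\<Sum>r<2 ^ n. if r = x then cosh z * exp (z * of_nat (length L)) else 0)"
    by (intro sum.cong) (auto simp: column diag)
  also have "\<dots> = cosh z * exp (z * of_nat (length L))"
    using x by simp
  finally show ?thesis .
qed

text \<open>The witness is the basis state whose only set bits are the controls of the first gate:
  that gate maps it to a different state, while all other gates of the layer fix it.\<close>
lemma cos_eq_0_if_layer_propagator_phase:
  assumes L: "disjoint_gates n L" "L \<noteq> []"
    and eq: "mexp ((- \<i> * complex_of_real s) \<cdot>\<^sub>m gates_sum n L) = e \<cdot>\<^sub>m gates_prod n L"
  shows "cos s = 0"
proof -
  obtain a b c L' where L_eq: "L = (a,b,c) # L'" using L(2) by (cases L) auto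
  define x :: nat where "x = set_bit a (set_bit b 0)"
  have abc: "a < n" "b < n" "c < n" "a \<noteq> c" "b \<noteq> c"
    using L(1) by (auto simp: L_eq valid_gate_def)
  have bit_x: "bit x i \<longleftrightarrow> i = a \<or> i = b" for i by (auto simp: x_def bit_set_bit_iff bit_exp_iff)
  have x: "x < 2 ^ n" using abc by (intro less_power_if_bits) (auto simp: bit_x)
  have gx: "toffoli_fun (a,b,c) x = flip_bit c x" by (simp add: toffoli_fun_def bit_x)
  have ctrl: "fst h \<notin> {a,b,c}" if "h \<in> set L'" for h
    using L(1) that by (cases h) (auto simp: L_eq gate_bits_def)
  have fixed: "toffoli_fun h y = y" if "h \<in> set L'" "y \<in> {x, flip_bit c x}" for h y
    using ctrl[OF that(1)] that(2) by (intro toffoli_fun_fixed) (auto simp: bit_flip_bit_iff bit_x)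
  then have "layer_fun L x = flip_bit c x"
    using gx by (simp add: L_eq layer_fun_fixed)
  then have "(e \<cdot>\<^sub>m gates_prod n L) $$ (x,x) = 0"
    using L(1) x flip_bit_neq[of c x] by (simp add: gates_prod_eq_perm_mat index_perm_mat)
  moreover have "(e \<cdot>\<^sub>m gates_prod n L) $$ (x,x) =
      cosh (- \<i> * complex_of_real s) * exp (- \<i> * complex_of_real s * of_nat (length L'))"
    unfolding eq[symmetric] unfolding L_eq using L(1) x gx flip_bit_neq[of c x] fixed
    by (intro index_mexp_smult_gates_sum_Cons) (auto simp: L_eq)
  ultimately have "cosh (- \<i> * complex_of_real s) = 0" by simp
  then show ?thesis unfolding cosh_minus_imag by simp
qed

section \<open>The standard parallel implementation\<close>

lemma power_minus_imag_eq_exp: "(- \<i>) ^ m = exp (\<i> * complex_of_real (real m * (- (pi / 2))))"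
proof -
  have "exp (\<i> * complex_of_real (real m * (- (pi / 2)))) = cis (real m * (- (pi / 2)))"
    by (simp add: cis_conv_exp)
  also have "\<dots> = cis (- (pi / 2)) ^ m" by (rule DeMoivre[symmetric])
  also have "cis (- (pi / 2)) = - \<i>" by (simp add: complex_eq_iff)
  finally show ?thesis by (rule sym)
qed

lemma spread_gates_sum_pos: "disjoint_gates n L \<Longrightarrow> L \<noteq> [] \<Longrightarrow> 0 < spread (gates_sum n L)"
  using spread_gates_sum[of n L] by (cases L) auto

lemma std_lambda_eq:
  assumes L: "disjoint_gates n L" "L \<noteq> []" and tau: "0 < tau"
  shows "std_lambda n tau L = tau / spread (gates_sum n L)"
  unfolding std_lambda_def
proof (rule the_equality)
  show "0 < tau / spread (gates_sum n L) \<and>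
      spread (complex_of_real (tau / spread (gates_sum n L)) \<cdot>\<^sub>m gates_sum n L) = tau"
    using spread_gates_sum_pos[OF L] tau spread_smult[OF gates_sum_carrier, of n "tau / spread (gates_sum n L)" L]
    by simp
next
  fix lam assume "0 < lam \<and> spread (complex_of_real lam \<cdot>\<^sub>m gates_sum n L) = tau"
  then show "lam = tau / spread (gates_sum n L)"
    using spread_gates_sum_pos[OF L] spread_smult[OF gates_sum_carrier, of n lam L] by (simp add: field_simps)
qed

lemma std_time_eq_quarter_period:
  assumes L: "disjoint_gates n L" "L \<noteq> []" and tau: "0 < tau"
  shows "std_time n tau L = pi / 2 / std_lambda n tau L"
proof -
  define lam where "lam = std_lambda n tau L"
  define S where "S = {t. 0 < t \<and> (\<exists>\<phi>::real.
      mexp ((- \<i> * complex_of_real (t * lam)) \<cdot>\<^sub>m gates_sum n L) =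
        exp (\<i> * complex_of_real \<phi>) \<cdot>\<^sub>m gates_prod n L)}"
  have lam: "0 < lam"
    using spread_gates_sum_pos[OF L] tau by (simp add: lam_def std_lambda_eq[OF L tau])
  have quarter: "pi / 2 / lam * lam = pi / 2" using lam by simp
  have "mexp ((- \<i> * complex_of_real (pi / 2 / lam * lam)) \<cdot>\<^sub>m gates_sum n L) =
      exp (\<i> * complex_of_real (real (length L) * (- (pi / 2)))) \<cdot>\<^sub>m gates_prod n L"
    unfolding quarter power_minus_imag_eq_exp[symmetric] by (rule mexp_quarter_period_gates_sum[OF L(1)])
  then have "pi / 2 / lam \<in> S"
    unfolding S_def using lam by (auto intro!: exI[of _ "real (length L) * (- (pi / 2))"])
  moreover have "pi / 2 / lam \<le> t" if "t \<in> S" for t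
  proof -
    have "0 < t" and "cos (t * lam) = 0"
      using that cos_eq_0_if_layer_propagator_phase[OF L] by (auto simp: S_def)
    moreover have "0 < t * lam" using \<open>0 < t\<close> lam by simp
    ultimately have "pi / 2 \<le> t * lam"
      using cos_gt_zero_pi[of "t * lam"] by force
    then show ?thesis using lam by (simp add: field_simps)
  qed
  ultimately show ?thesis
    unfolding std_time_def lam_def[symmetric] S_def[symmetric] by (rule cInf_eq_minimum)
qed

lemma std_time_ge:
  assumes L: "valid_layer n L" and tau: "0 < tau"
  shows "pi * real (length L) / tau \<le> std_time n tau L"
proof -
  have D: "disjoint_gates n L" "L \<noteq> []"
    using L by (simp_all add: valid_layer_disjoint_gates valid_layer_def)
  have "pi * real (length L) / tau = pi / 2 * (2 * real (length L)) / tau" by simp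
  also have "\<dots> \<le> pi / 2 * spread (gates_sum n L) / tau"
    using spread_gates_sum[OF D(1)] tau by (intro divide_right_mono mult_left_mono) auto
  also have "\<dots> = std_time n tau L"
    using spread_gates_sum_pos[OF D] tau by (simp add: std_time_eq_quarter_period[OF D tau] std_lambda_eq[OF D tau])
  finally show ?thesis .
qed

lemma std_total_time_ge:
  assumes "valid_circuit n C" "0 < tau"
  shows "pi * real (circuit_size C) / tau \<le> std_total_time n tau C"
proof -
  have "pi * real (circuit_size C) / tau = (\<Sum>L\<leftarrow>C. pi * real (length L) / tau)"
    by (induction C) (simp_all add: circuit_size_def add_divide_distrib distrib_left)
  also have "\<dots> \<le> std_total_time n tau C"
    unfolding std_total_time_def using assms
    by (intro sum_list_mono std_time_ge) (auto simp: valid_circuit_def)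
  finally show ?thesis .
qed

section \<open>Coherent parallelisation\<close>

text \<open>Time \<pi>/\<tau> under (\<tau>/2) P is a quarter period of the involution P realised by the layer:
  the propagator is exp(-i \<pi>/2 P) = -i P.\<close>
definition coherent_hamiltonian :: "nat \<Rightarrow> real \<Rightarrow> circuit \<Rightarrow> (real \<times> complex mat) list" where
  "coherent_hamiltonian n tau C = map (\<lambda>L. (pi / tau, complex_of_real (tau / 2) \<cdot>\<^sub>m gates_prod n L)) C"

lemma valid_coherent_hamiltonian:
  assumes C: "valid_circuit n C" and tau: "0 < tau"
  shows "valid_pc_hamiltonian n tau (coherent_hamiltonian n tau C)"
proof -
  have "hermitian_mat (complex_of_real (tau / 2) \<cdot>\<^sub>m gates_prod n L) \<and>
      spread (complex_of_real (tau / 2) \<cdot>\<^sub>m gates_prod n L) \<le> tau" if "L \<in> set C" for L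
  proof
    have L: "disjoint_gates n L"
      using C that by (simp add: valid_circuit_def valid_layer_disjoint_gates)
    show "hermitian_mat (complex_of_real (tau / 2) \<cdot>\<^sub>m gates_prod n L)"
      unfolding gates_prod_eq_perm_mat[OF L]
      by (rule hermitian_smult_perm_mat) (rule layer_fun_layer_fun[OF L])
    have "spread (complex_of_real (tau / 2) \<cdot>\<^sub>m gates_prod n L) = tau / 2 * spread (gates_prod n L)"
      using tau by (intro spread_smult[OF gates_prod_carrier]) auto
    also have "\<dots> \<le> tau / 2 * 2"
      using tau spread_involution[OF gates_prod_carrier gates_prod_involution[OF L]]
      by (intro mult_left_mono) auto
    finally show "spread (complex_of_real (tau / 2) \<cdot>\<^sub>m gates_prod n L) \<le> tau" by simp
  qed
  then show ?thesis
    using tau by (auto simp: valid_pc_hamiltonian_def coherent_hamiltonian_def)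
qed

lemma pc_duration_coherent_hamiltonian:
  "pc_duration (coherent_hamiltonian n tau C) = real (length C) * (pi / tau)"
  by (induction C) (simp_all add: pc_duration_def coherent_hamiltonian_def algebra_simps)

lemma fold_coherent_propagators:
  assumes C: "\<forall>L\<in>set C. disjoint_gates n L" and F: "\<And>j. j < 2 ^ n \<Longrightarrow> F j < 2 ^ n"
    and tau: "0 < tau"
  shows "fold (\<lambda>(d,H) U. mexp ((- \<i> * complex_of_real d) \<cdot>\<^sub>m H) * U) (coherent_hamiltonian n tau C)
      (c \<cdot>\<^sub>m perm_mat n F) = (c * (- \<i>) ^ length C) \<cdot>\<^sub>m perm_mat n (fold layer_fun C \<circ> F)"
  using C F
proof (induction C arbitrary: c F)
  case (Cons L C)
  then have L: "disjoint_gates n L" by simp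
  have "(- \<i> * complex_of_real (pi / tau)) \<cdot>\<^sub>m (complex_of_real (tau / 2) \<cdot>\<^sub>m gates_prod n L) =
      (- \<i> * complex_of_real (pi / 2)) \<cdot>\<^sub>m gates_prod n L"
    using tau by (simp add: smult_smult_mat field_simps)
  then have "mexp ((- \<i> * complex_of_real (pi / tau)) \<cdot>\<^sub>m (complex_of_real (tau / 2) \<cdot>\<^sub>m gates_prod n L)) =
      (- \<i>) \<cdot>\<^sub>m gates_prod n L"
    by (simp only: mexp_quarter_period_involution[OF gates_prod_carrier gates_prod_involution[OF L]])
  then have "mexp ((- \<i> * complex_of_real (pi / tau)) \<cdot>\<^sub>m (complex_of_real (tau / 2) \<cdot>\<^sub>m gates_prod n L)) *
      (c \<cdot>\<^sub>m perm_mat n F) = (- \<i> * c) \<cdot>\<^sub>m perm_mat n (layer_fun L \<circ> F)"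
    by (simp add: gates_prod_eq_perm_mat[OF L] smult_mult_smult_mat[OF perm_mat_carrier perm_mat_carrier]
        perm_mat_mult[OF Cons.prems(2)])
  moreover have "(layer_fun L \<circ> F) j < 2 ^ n" if "j < 2 ^ n" for j
    using that Cons.prems L by (simp add: layer_fun_less disjoint_gates_def)
  ultimately show ?case
    using Cons by (simp add: coherent_hamiltonian_def comp_def ac_simps)
qed (simp add: coherent_hamiltonian_def)

lemma time_ordered_exp_coherent_hamiltonian:
  assumes "valid_circuit n C" "0 < tau"
  shows "time_ordered_exp n (coherent_hamiltonian n tau C) =
    exp (\<i> * complex_of_real (real (length C) * (- (pi / 2)))) \<cdot>\<^sub>m circuit_unitary n C"
proof -
  have "1\<^sub>m (2 ^ n) = (1 :: complex) \<cdot>\<^sub>m perm_mat n id" by (auto simp: perm_mat_id intro!: eq_matI)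
  moreover have "circuit_fun C = fold layer_fun C" by (rule ext) (simp add: circuit_fun_def)
  ultimately show ?thesis
    using assms fold_coherent_propagators[of C n id tau 1]
    by (simp add: time_ordered_exp_def circuit_unitary_def power_minus_imag_eq_exp
        valid_circuit_def valid_layer_disjoint_gates)
qed

lemma coherent_time_le:
  assumes "valid_circuit n C" "0 < tau"
  shows "real (circuit_depth C) * (pi / tau) \<le>
    std_total_time n tau C / (real (circuit_size C) / real (circuit_depth C))"
proof -
  obtain L C' where "C = L # C'" "L \<noteq> []"
    using assms(1) by (cases C) (auto simp: valid_circuit_def valid_layer_def)
  then have "0 < circuit_size C" "0 < circuit_depth C"
    by (simp_all add: circuit_size_def circuit_depth_def)
  then show ?thesis
    using std_total_time_ge[OF assms] assms(2)
    by (simp add: field_simps mult_right_mono)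
qed

theorem mainTheorem3:
  fixes C :: "nat \<Rightarrow> circuit" and \<tau> :: "nat \<Rightarrow> real"
  assumes valid: "\<And>n. n \<ge> 3 \<Longrightarrow> valid_circuit n (C n)"
    and tau_pos: "\<And>n. \<tau> n > 0"
  shows "\<exists>Tsharp :: nat \<Rightarrow> real.
     Tsharp \<in> O(\<lambda>n. std_total_time n (\<tau> n) (C n) /
                    (real (circuit_size (C n)) / real (circuit_depth (C n)))) \<and>
     (\<forall>n\<ge>3. \<exists>Hs. valid_pc_hamiltonian n (\<tau> n) Hs \<and> pc_duration Hs = Tsharp n \<and>
        (\<exists>\<phi>::real. time_ordered_exp n Hs =
            exp (\<i> * complex_of_real \<phi>) \<cdot>\<^sub>m circuit_unitary n (C n)))"
proof -
  define Tsharp where "Tsharp n = real (circuit_depth (C n)) * (pi / \<tau> n)" for n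
  have "Tsharp \<in> O(\<lambda>n. std_total_time n (\<tau> n) (C n) /
                    (real (circuit_size (C n)) / real (circuit_depth (C n))))"
  proof (rule bigoI[where c = 1], rule eventually_at_top_linorderI)
    fix n :: nat assume "3 \<le> n"
    then show "norm (Tsharp n) \<le> 1 * norm (std_total_time n (\<tau> n) (C n) /
                    (real (circuit_size (C n)) / real (circuit_depth (C n))))"
      using order_trans[OF coherent_time_le[OF valid tau_pos] abs_ge_self] tau_pos[of n]
      unfolding Tsharp_def by simp
  qed
  moreover have "valid_pc_hamiltonian n (\<tau> n) (coherent_hamiltonian n (\<tau> n) (C n)) \<and>
      pc_duration (coherent_hamiltonian n (\<tau> n) (C n)) = Tsharp n \<and>
      time_ordered_exp n (coherent_hamiltonian n (\<tau> n) (C n)) =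
        exp (\<i> * complex_of_real (real (length (C n)) * (- (pi / 2)))) \<cdot>\<^sub>m circuit_unitary n (C n)"
    if "3 \<le> n" for n
    using that valid_coherent_hamiltonian[OF valid tau_pos] time_ordered_exp_coherent_hamiltonian[OF valid tau_pos]
    by (simp add: Tsharp_def circuit_depth_def pc_duration_coherent_hamiltonian)
  ultimately show ?thesis by blast
qed

end
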